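(* Given a mixture of Bayesian network distributions that are Markovian in $\mathcal{G}$, if $X \perp \!\!\! \perp^{\mathcal{G}}_d Y \mid \vec{C}$, then for all assignments $\vec{c}$ to $\vec{C}$, $\operatorname{rk}_+(\mathbf{M}[X, Y \mid \vec c]) \leq k$.
   Context: $\mathcal{G} = (\vec{V}, \vec{E})$ is a DAG on observed discrete variables; a latent discrete variable $U \in \{1,\ldots,k\}$ is a parent of every observed variable (the augmented DAG is $\mathcal{G}'$), so the observed distribution is a $k$-mixture (over values $u$ of $U$) of distributions $\Pr(\vec V \mid u)$, each Markovian in $\mathcal{G}$. $X, Y \in \vec V$, $\vec C \subseteq \vec V$. For discrete $X,Y$ with $m$ values, the probability matrix $\mathbf{M}[X, Y \mid \vec{c}] \in [0,1]^{m\times m}$ has entries $\mathbf{M}[X, Y \mid \vec{c}]_{x,y} := \Pr(x, y \mid \vec{c})$. $\operatorname{rk}_+$ denotes nonnegative rank. $\perp \!\!\! \perp^{\mathcal{G}}_d$ denotes d-separation in $\mathcal{G}$. *)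

theory Defs
  imports Complex_Main
begin

text \<open>The DAG is given by an edge relation E :: ('v \<times> 'v) set, (u,v) \<in> E meaning u \<rightarrow> v.\<close>

definition is_dag :: "('v \<times> 'v) set \<Rightarrow> bool" where
  "is_dag E \<longleftrightarrow> acyclic E"

definition parents :: "('v \<times> 'v) set \<Rightarrow> 'v \<Rightarrow> 'v set" where
  "parents E v = {w. (w, v) \<in> E}"

definition descendants :: "('v \<times> 'v) set \<Rightarrow> 'v \<Rightarrow> 'v set" where
  "descendants E v = {w. (v, w) \<in> E\<^sup>*}"

definition is_distribution :: "(('v::finite \<Rightarrow> 'a::finite) \<Rightarrow> real) \<Rightarrow> bool" where
  "is_distribution P \<longleftrightarrow> (\<forall>x. P x \<ge> 0) \<and> (\<Sum>x\<in>UNIV. P x) = 1"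

definition markovian :: "('v \<times> 'v) set \<Rightarrow> (('v::finite \<Rightarrow> 'a::finite) \<Rightarrow> real) \<Rightarrow> bool" where
  "markovian E P \<longleftrightarrow>
     (\<exists>K :: 'v \<Rightarrow> 'a \<Rightarrow> ('v \<Rightarrow> 'a) \<Rightarrow> real.
        (\<forall>v a z. K v a z \<ge> 0) \<and>
        (\<forall>v z. (\<Sum>a\<in>UNIV. K v a z) = 1) \<and>
        (\<forall>v a z z'. (\<forall>w\<in>parents E v. z w = z' w) \<longrightarrow> K v a z = K v a z') \<and>
        (\<forall>x. P x = (\<Prod>v\<in>UNIV. K v (x v) x)))"

text \<open>P is a k-mixture of distributions Markovian in G (latent U with values 0..k-1,
parent of every observed variable).\<close>
definition mixture_markovian ::
  "('v \<times> 'v) set \<Rightarrow> nat \<Rightarrow> (('v::finite \<Rightarrow> 'a::finite) \<Rightarrow> real) \<Rightarrow> bool" where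
  "mixture_markovian E k P \<longleftrightarrow>
     (\<exists>(w :: nat \<Rightarrow> real) (Q :: nat \<Rightarrow> ('v \<Rightarrow> 'a) \<Rightarrow> real).
        (\<forall>u<k. w u \<ge> 0) \<and> (\<Sum>u<k. w u) = 1 \<and>
        (\<forall>u<k. is_distribution (Q u) \<and> markovian E (Q u)) \<and>
        (\<forall>x. P x = (\<Sum>u<k. w u * Q u x)))"

definition is_path :: "('v \<times> 'v) set \<Rightarrow> 'v list \<Rightarrow> bool" where
  "is_path E p \<longleftrightarrow> p \<noteq> [] \<and> distinct p \<and>
     (\<forall>i. Suc i < length p \<longrightarrow> (p ! i, p ! Suc i) \<in> E \<or> (p ! Suc i, p ! i) \<in> E)"

definition collider_at :: "('v \<times> 'v) set \<Rightarrow> 'v list \<Rightarrow> nat \<Rightarrow> bool" where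
  "collider_at E p i \<longleftrightarrow> (p ! (i - 1), p ! i) \<in> E \<and> (p ! Suc i, p ! i) \<in> E"

definition blocked :: "('v \<times> 'v) set \<Rightarrow> 'v set \<Rightarrow> 'v list \<Rightarrow> bool" where
  "blocked E C p \<longleftrightarrow>
     (\<exists>i. 0 < i \<and> Suc i < length p \<and>
        (if collider_at E p i then descendants E (p ! i) \<inter> C = {} else p ! i \<in> C))"

definition d_separated :: "('v \<times> 'v) set \<Rightarrow> 'v \<Rightarrow> 'v \<Rightarrow> 'v set \<Rightarrow> bool" where
  "d_separated E X Y C \<longleftrightarrow>
     (\<forall>p. is_path E p \<and> hd p = X \<and> last p = Y \<longrightarrow> blocked E C p)"

text \<open>Pr(X=x, Y=y, C=c) and Pr(C=c); c is an assignment whose values on C matter.\<close>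
definition prob_event :: "(('v::finite \<Rightarrow> 'a::finite) \<Rightarrow> real) \<Rightarrow> (('v \<Rightarrow> 'a) \<Rightarrow> bool) \<Rightarrow> real" where
  "prob_event P A = (\<Sum>z\<in>{z. A z}. P z)"

definition prob_matrix ::
  "(('v::finite \<Rightarrow> 'a::finite) \<Rightarrow> real) \<Rightarrow> 'v \<Rightarrow> 'v \<Rightarrow> 'v set \<Rightarrow> ('v \<Rightarrow> 'a) \<Rightarrow> 'a \<Rightarrow> 'a \<Rightarrow> real" where
  "prob_matrix P X Y C c x y =
     prob_event P (\<lambda>z. z X = x \<and> z Y = y \<and> (\<forall>v\<in>C. z v = c v))
     / prob_event P (\<lambda>z. \<forall>v\<in>C. z v = c v)"

definition nonneg_rank :: "('a::finite \<Rightarrow> 'b::finite \<Rightarrow> real) \<Rightarrow> nat" where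
  "nonneg_rank M = (LEAST r. \<exists>(A :: 'a \<Rightarrow> nat \<Rightarrow> real) (B :: nat \<Rightarrow> 'b \<Rightarrow> real).
      (\<forall>x i. A x i \<ge> 0) \<and> (\<forall>i y. B i y \<ge> 0) \<and>
      (\<forall>x y. M x y = (\<Sum>i<r. A x i * B i y)))"

end

(* If C d-separates X and Y, a "Bayes ball" started at X never reaches Y: every route of the
   ball is a d-connecting walk, and a d-connecting walk can be shortened to a d-connecting path.
   Let R be the set of nodes outside C reached by the ball. In the ancestral set of X, Y and C
   every family (a node together with its parents) lies in R \<union> C or avoids R, since otherwise
   the ball would pass on from a reached member of the family and eventually reach Y. For a
   distribution factorising along the DAG, summing out the non-ancestral nodes (sinks first) and
   fixing C = c therefore splits Pr(x, y, c) into a function of x, collecting the tables of the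
   families meeting R, times a function of y. A k-mixture of such distributions gives a sum of
   k nonnegative rank-one matrices. *)

theory Submission
  imports Defs "HOL-Library.Cardinality"
begin

section \<open>Ancestors and d-connecting walks\<close>

lemma acyclic_edge_asym: "acyclic E \<Longrightarrow> (a, b) \<in> E \<Longrightarrow> (b, a) \<notin> E"
  unfolding acyclic_def by (meson r_into_trancl trancl_into_trancl)

definition ancestors :: "('v \<times> 'v) set \<Rightarrow> 'v set \<Rightarrow> 'v set" where
  "ancestors E S = {v. \<exists>s\<in>S. (v, s) \<in> E\<^sup>*}"

lemma subset_ancestors: "S \<subseteq> ancestors E S"
  unfolding ancestors_def by auto

lemma notin_ancestorsD: "v \<notin> ancestors E S \<Longrightarrow> v \<notin> S"
  unfolding ancestors_def by blast

lemma ancestors_edge: "(u, v) \<in> E \<Longrightarrow> v \<in> ancestors E S \<Longrightarrow> u \<in> ancestors E S"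
  unfolding ancestors_def by (blast intro: converse_rtrancl_into_rtrancl)

lemma ancestors_rtrancl: "(u, v) \<in> E\<^sup>* \<Longrightarrow> v \<in> ancestors E S \<Longrightarrow> u \<in> ancestors E S"
  unfolding ancestors_def by (blast intro: rtrancl_trans)

definition family :: "('v \<times> 'v) set \<Rightarrow> 'v \<Rightarrow> 'v set" where
  "family E v = insert v (parents E v)"

lemma family_subset_ancestors:
  assumes "v \<in> ancestors E S"
  shows "family E v \<subseteq> ancestors E S"
proof
  fix u assume "u \<in> family E v"
  then show "u \<in> ancestors E S"
    using assms ancestors_edge[of u v E S] unfolding family_def parents_def by auto
qed

lemma descendants_disjoint_iff: "descendants E v \<inter> C = {} \<longleftrightarrow> v \<notin> ancestors E C"
  unfolding descendants_def ancestors_def by blast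

definition adjacent :: "('v \<times> 'v) set \<Rightarrow> 'v \<Rightarrow> 'v \<Rightarrow> bool" where
  "adjacent E a b \<longleftrightarrow> (a, b) \<in> E \<or> (b, a) \<in> E"

(* The negation of the blocking condition of blocked at an interior node b with neighbours a, c. *)
definition open_triple :: "('v \<times> 'v) set \<Rightarrow> 'v set \<Rightarrow> 'v \<Rightarrow> 'v \<Rightarrow> 'v \<Rightarrow> bool" where
  "open_triple E C a b c \<longleftrightarrow>
     (if (a, b) \<in> E \<and> (c, b) \<in> E then b \<in> ancestors E C else b \<notin> C)"

fun d_connecting :: "('v \<times> 'v) set \<Rightarrow> 'v set \<Rightarrow> 'v list \<Rightarrow> bool" where
  "d_connecting E C [] \<longleftrightarrow> False"
| "d_connecting E C [a] \<longleftrightarrow> True"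
| "d_connecting E C [a, b] \<longleftrightarrow> adjacent E a b"
| "d_connecting E C (a # b # c # p) \<longleftrightarrow>
     adjacent E a b \<and> open_triple E C a b c \<and> d_connecting E C (b # c # p)"

lemma d_connecting_adjacent_hd: "d_connecting E C (a # b # p) \<Longrightarrow> adjacent E a b"
  by (cases p) auto

lemma d_connecting_ConsD: "d_connecting E C (a # p) \<Longrightarrow> p \<noteq> [] \<Longrightarrow> d_connecting E C p"
  by (cases "(E, C, a # p)" rule: d_connecting.cases) auto

lemma d_connecting_suffix: "d_connecting E C (xs @ ys) \<Longrightarrow> ys \<noteq> [] \<Longrightarrow> d_connecting E C ys"
  by (induction xs) (auto dest: d_connecting_ConsD)

lemma d_connecting_prefix: "d_connecting E C (xs @ ys) \<Longrightarrow> xs \<noteq> [] \<Longrightarrow> d_connecting E C xs"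
proof (induction xs rule: induct_list012)
  case (3 a b xs)
  then show ?case by (cases xs) (auto dest: d_connecting_adjacent_hd)
qed auto

lemma d_connecting_Cons_Cons:
  "zs \<noteq> [] \<Longrightarrow> d_connecting E C (x # y # zs) \<longleftrightarrow>
     adjacent E x y \<and> open_triple E C x y (hd zs) \<and> d_connecting E C (y # zs)"
  by (cases zs) auto

lemma d_connecting_append_iff:
  "d_connecting E C (xs @ a # b # ys) \<longleftrightarrow> d_connecting E C (xs @ [a, b]) \<and> d_connecting E C (a # b # ys)"
proof (induction xs rule: induct_list012)
  case (2 x)
  then show ?case by (auto dest: d_connecting_adjacent_hd)
next
  case (3 x y xs)
  have "hd (xs @ a # b # ys) = hd (xs @ [a, b])" by (cases xs) auto
  then show ?case using "3.IH"(2) by (simp add: d_connecting_Cons_Cons)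
qed (auto dest: d_connecting_adjacent_hd)

lemma d_connecting_snoc:
  assumes "d_connecting E C (xs @ [t])" and "adjacent E t s"
    and "xs \<noteq> [] \<Longrightarrow> open_triple E C (last xs) t s"
  shows "d_connecting E C (xs @ [t, s])"
proof (cases xs rule: rev_cases)
  case (snoc ys a)
  then show ?thesis
    using assms d_connecting_append_iff[of E C ys a t "[s]"] d_connecting_append_iff[of E C ys a t "[]"]
    by (auto dest: d_connecting_adjacent_hd)
qed (use assms in simp)

lemma collider_at_Cons: "0 < i \<Longrightarrow> collider_at E (a # p) (Suc i) \<longleftrightarrow> collider_at E p i"
  unfolding collider_at_def by (cases i) auto

lemma d_connecting_not_blocked: "d_connecting E C p \<Longrightarrow> \<not> blocked E C p"
proof (induction p rule: d_connecting.induct)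
  case (4 E C a b c p)
  show ?case
  proof
    assume "blocked E C (a # b # c # p)"
    then obtain i where i: "0 < i" "Suc i < length (a # b # c # p)"
      and cond: "if collider_at E (a # b # c # p) i then descendants E ((a # b # c # p) ! i) \<inter> C = {}
                 else (a # b # c # p) ! i \<in> C"
      unfolding blocked_def by blast
    show False
    proof (cases "i = 1")
      case True
      then show False
        using cond "4.prems" by (simp add: collider_at_def open_triple_def descendants_disjoint_iff split: if_splits)
    next
      case False
      then obtain j where "i = Suc j" "0 < j" using i by (cases i) auto
      then have "blocked E C (b # c # p)"
        using i cond unfolding blocked_def by (intro exI[of _ j]) (auto simp: collider_at_Cons)
      then show False using "4.IH" "4.prems" by simp
    qed
  qed
qed (auto simp: blocked_def)

lemma d_connecting_adjacent:
  "d_connecting E C p \<Longrightarrow> Suc i < length p \<Longrightarrow> adjacent E (p ! i) (p ! Suc i)"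
proof (induction p arbitrary: i rule: d_connecting.induct)
  case (4 E C a b c p)
  then show ?case by (cases i) auto
qed auto

lemma d_connecting_is_path: "d_connecting E C p \<Longrightarrow> distinct p \<Longrightarrow> is_path E p"
  unfolding is_path_def using d_connecting_adjacent[of E C p]
  by (auto simp: adjacent_def)


lemma d_connecting_directed_from:
  assumes "d_connecting E C (w # u # p)" and "(w, u) \<in> E" and "w \<notin> ancestors E C"
    and "x \<in> set (u # p)"
  shows "(w, x) \<in> E\<^sup>+"
  using assms
proof (induction p arbitrary: w u)
  case (Cons r p)
  show ?case
  proof (cases "x = u")
    case False
    have "u \<notin> ancestors E C" using ancestors_edge[OF Cons.prems(2)] Cons.prems(3) by blast
    moreover have "(u, r) \<in> E"
      using Cons.prems(1,2) \<open>u \<notin> ancestors E C\<close> notin_ancestorsD[of u E C]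
      by (auto simp: open_triple_def adjacent_def split: if_splits dest: d_connecting_adjacent_hd)
    ultimately have "(u, x) \<in> E\<^sup>+"
      using Cons.IH[of u r] Cons.prems False by auto
    then show ?thesis using Cons.prems(2) by auto
  qed (use Cons.prems in auto)
qed auto

lemma open_triple_shortcut:
  assumes "open_triple E C a w u" and "open_triple E C v w b" and "adjacent E w u"
    and "(a, w) \<in> E \<Longrightarrow> (w, u) \<in> E \<Longrightarrow> w \<in> ancestors E C"
  shows "open_triple E C a w b"
  using assms unfolding open_triple_def adjacent_def by (auto split: if_splits)

(* The junction triple (a, w, b) stays open: were it a collider while the first visit to w is
   not, the walk would leave w along an edge and, unless w is an ancestor of C, stay directed
   until it returns to w. *)
lemma d_connecting_remove_loop:
  assumes "acyclic E" and "d_connecting E C (xs @ w # ys @ w # zs)"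
  shows "d_connecting E C (xs @ w # zs)"
proof (cases "xs = [] \<or> zs = []")
  case True
  then show ?thesis
    using assms(2) d_connecting_suffix[of E C "xs @ w # ys"] d_connecting_prefix[of E C "xs @ [w]"]
    by auto
next
  case False
  then obtain xs' a b zs' where xs: "xs = xs' @ [a]" and zs: "zs = b # zs'"
    by (metis neq_Nil_conv rev_exhaust)
  obtain u ys' where u: "ys @ [w] = u # ys'" by (cases "ys @ [w]") auto
  obtain ys'' v where v: "w # ys = ys'' @ [v]" by (cases "w # ys" rule: rev_cases) auto
  have p1: "xs @ w # ys @ w # zs = xs' @ a # w # u # ys' @ zs"
    using xs u by simp
  have p2: "xs @ w # ys @ w # zs = (xs' @ a # ys'') @ v # w # b # zs'"
    using xs zs v by simp
  have walk_a: "d_connecting E C (a # w # u # ys' @ zs)"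
    using assms(2) unfolding p1 by (rule d_connecting_suffix) simp
  have walk_v: "d_connecting E C (v # w # b # zs')"
    using assms(2) unfolding p2 by (rule d_connecting_suffix) simp
  have "w \<in> ancestors E C" if "(w, u) \<in> E"
  proof (rule ccontr)
    assume "w \<notin> ancestors E C"
    moreover have "w \<in> set (u # ys')" unfolding u[symmetric] by simp
    ultimately have "(w, w) \<in> E\<^sup>+"
      using d_connecting_directed_from[OF d_connecting_ConsD[OF walk_a]] that by auto
    then show False using assms(1) unfolding acyclic_def by blast
  qed
  then have "open_triple E C a w b"
    using walk_a walk_v by (intro open_triple_shortcut[of E C a w u v b]) (auto dest: d_connecting_adjacent_hd d_connecting_ConsD)
  moreover have "d_connecting E C (xs' @ [a, w])"
    using assms(2) d_connecting_append_iff[of E C xs' a w "u # ys' @ zs"] unfolding p1 by blast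
  ultimately show ?thesis
    using walk_a walk_v d_connecting_append_iff[of E C xs' a w "b # zs'"] unfolding xs zs
    by (auto dest: d_connecting_adjacent_hd)
qed

lemma d_connecting_distinct:
  assumes "acyclic E" and "d_connecting E C p"
  shows "\<exists>q. d_connecting E C q \<and> distinct q \<and> hd q = hd p \<and> last q = last p"
  using assms(2)
proof (induction p rule: length_induct)
  case (1 p)
  show ?case
  proof (cases "distinct p")
    case False
    then obtain xs w ys zs where p: "p = xs @ w # ys @ w # zs"
      using not_distinct_decomp by fastforce
    then have "d_connecting E C (xs @ w # zs)"
      using d_connecting_remove_loop[OF assms(1)] "1.prems" unfolding p by blast
    moreover have "length (xs @ w # zs) < length p" unfolding p by simp
    ultimately obtain q where "d_connecting E C q" "distinct q"
      "hd q = hd (xs @ w # zs)" "last q = last (xs @ w # zs)"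
      using "1.IH" by blast
    moreover have "hd (xs @ w # zs) = hd p" "last (xs @ w # zs) = last p"
      unfolding p by (cases xs; cases zs; simp)+
    ultimately show ?thesis by metis
  qed (use "1.prems" in blast)
qed

section \<open>Bayes ball\<close>

(* The flag records whether the ball arrived along an edge pointing into the node. *)
inductive bayes_ball :: "('v \<times> 'v) set \<Rightarrow> 'v set \<Rightarrow> 'v \<Rightarrow> bool \<Rightarrow> 'v \<Rightarrow> bool"
  for E C X where
  start: "bayes_ball E C X False X"
| forward: "bayes_ball E C X b t \<Longrightarrow> t \<notin> C \<Longrightarrow> (t, s) \<in> E \<Longrightarrow> bayes_ball E C X True s"
| backward: "bayes_ball E C X False t \<Longrightarrow> t \<notin> C \<Longrightarrow> (s, t) \<in> E \<Longrightarrow> bayes_ball E C X False s"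
| bounce: "bayes_ball E C X True t \<Longrightarrow> t \<in> ancestors E C \<Longrightarrow> (s, t) \<in> E \<Longrightarrow> bayes_ball E C X False s"

lemma bayes_ball_d_connecting:
  assumes "acyclic E" and "bayes_ball E C X b t"
  shows "\<exists>xs. d_connecting E C (xs @ [t]) \<and> hd (xs @ [t]) = X \<and> (b \<longleftrightarrow> xs \<noteq> [] \<and> (last xs, t) \<in> E)"
  using assms(2)
proof induction
  case start
  show ?case by (intro exI[of _ "[]"]) simp
next
  case (forward b t s)
  then obtain xs where xs: "d_connecting E C (xs @ [t])" "hd (xs @ [t]) = X" by blast
  have "(s, t) \<notin> E" using acyclic_edge_asym[OF assms(1) forward.hyps(3)] .
  then have "d_connecting E C (xs @ [t, s])"
    using xs forward.hyps by (intro d_connecting_snoc) (auto simp: adjacent_def open_triple_def)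
  then show ?case using xs forward.hyps by (intro exI[of _ "xs @ [t]"]) (auto simp: hd_append)
next
  case (backward t s)
  then obtain xs where xs: "d_connecting E C (xs @ [t])" "hd (xs @ [t]) = X"
    "\<not> (xs \<noteq> [] \<and> (last xs, t) \<in> E)" by blast
  have "(t, s) \<notin> E" using acyclic_edge_asym[OF assms(1) backward.hyps(3)] .
  moreover have "d_connecting E C (xs @ [t, s])"
    using xs backward.hyps by (intro d_connecting_snoc) (auto simp: adjacent_def open_triple_def)
  ultimately show ?case using xs by (intro exI[of _ "xs @ [t]"]) (auto simp: hd_append)
next
  case (bounce t s)
  then obtain xs where xs: "d_connecting E C (xs @ [t])" "hd (xs @ [t]) = X"
    "xs \<noteq> []" "(last xs, t) \<in> E" by blast
  have "(t, s) \<notin> E" using acyclic_edge_asym[OF assms(1) bounce.hyps(3)] .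
  moreover have "d_connecting E C (xs @ [t, s])"
    using xs bounce.hyps by (intro d_connecting_snoc) (auto simp: adjacent_def open_triple_def)
  ultimately show ?case using xs by (intro exI[of _ "xs @ [t]"]) (auto simp: hd_append)
qed

lemma d_separated_no_bayes_ball:
  assumes "acyclic E" and "d_separated E X Y C"
  shows "\<not> bayes_ball E C X b Y"
proof
  assume "bayes_ball E C X b Y"
  then obtain p where "d_connecting E C p" "hd p = X" "last p = Y"
    using bayes_ball_d_connecting[OF assms(1)] by fastforce
  then obtain q where "d_connecting E C q" "distinct q" "hd q = X" "last q = Y"
    using d_connecting_distinct[OF assms(1)] by metis
  then show False
    using assms(2) d_connecting_is_path d_connecting_not_blocked unfolding d_separated_def by blast
qed

lemma bayes_ball_descend:
  assumes "bayes_ball E C X b t" and "t \<notin> ancestors E C" and "(t, s) \<in> E\<^sup>*"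
  shows "\<exists>b'. bayes_ball E C X b' s"
  using assms(3)
proof induction
  case (step y z)
  have "y \<notin> ancestors E C" using ancestors_rtrancl[OF step.hyps(1)] assms(2) by blast
  then have "y \<notin> C" by (rule notin_ancestorsD)
  then show ?case using step.IH step.hyps(2) by (blast intro: bayes_ball.forward)
qed (use assms(1) in blast)

lemma bayes_ball_ascend_to_start:
  assumes "(t, X) \<in> E\<^sup>*" and "t \<notin> ancestors E C"
  shows "bayes_ball E C X False t"
  using assms
proof (induction rule: converse_rtrancl_induct)
  case (step y z)
  have "z \<notin> ancestors E C" using ancestors_edge[OF step.hyps(1)] step.prems by blast
  then have "bayes_ball E C X False z" by (rule step.IH)
  moreover have "z \<notin> C" using \<open>z \<notin> ancestors E C\<close> by (rule notin_ancestorsD)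
  ultimately show ?case using step.hyps(1) by (rule bayes_ball.backward)
qed (rule bayes_ball.start)

lemma bayes_ball_parent:
  assumes no_Y: "\<And>b. \<not> bayes_ball E C X b Y"
    and ball: "bayes_ball E C X b t" and open_t: "b \<or> t \<notin> C"
    and t: "t \<in> ancestors E (insert X (insert Y C))" and w: "(w, t) \<in> E"
  shows "\<exists>b'. bayes_ball E C X b' w"
proof (cases "t \<in> ancestors E C")
  case True
  then show ?thesis using ball open_t w
    by (cases b) (auto intro: bayes_ball.bounce bayes_ball.backward dest: notin_ancestorsD)
next
  case False
  then have "t \<notin> C" by (rule notin_ancestorsD)
  from t False consider "(t, X) \<in> E\<^sup>*" | "(t, Y) \<in> E\<^sup>*"
    unfolding ancestors_def by blast
  then show ?thesis
  proof cases
    case 1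
    then have "bayes_ball E C X False t" using False by (rule bayes_ball_ascend_to_start)
    then show ?thesis using \<open>t \<notin> C\<close> w by (blast intro: bayes_ball.backward)
  next
    case 2
    then show ?thesis using bayes_ball_descend[OF ball False] no_Y by blast
  qed
qed

lemma bayes_ball_family:
  assumes no_Y: "\<And>b. \<not> bayes_ball E C X b Y"
    and v: "v \<in> ancestors E (insert X (insert Y C))"
    and t: "t \<in> family E v" "t \<notin> C" "bayes_ball E C X b t"
    and w: "w \<in> family E v"
  shows "\<exists>b'. bayes_ball E C X b' w"
proof -
  obtain b' where ball_v: "bayes_ball E C X b' v" and open_v: "b' \<or> v \<notin> C"
  proof (cases "t = v")
    case True
    then show thesis using t(2,3) that by blast
  next
    case False
    then have "(t, v) \<in> E" using t(1) unfolding family_def parents_def by blast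
    with t(3,2) have "bayes_ball E C X True v" by (rule bayes_ball.forward)
    then show thesis using that by blast
  qed
  show ?thesis
  proof (cases "w = v")
    case True
    then show ?thesis using ball_v by blast
  next
    case False
    then have "(w, v) \<in> E" using w unfolding family_def parents_def by blast
    then show ?thesis by (rule bayes_ball_parent[OF no_Y ball_v open_v v])
  qed
qed

lemma d_separated_splits_families:
  assumes "acyclic E" and "d_separated E X Y C"
  shows "\<exists>R. R \<inter> C = {} \<and> X \<in> R \<union> C \<and> Y \<notin> R \<and>
    (\<forall>v\<in>ancestors E (insert X (insert Y C)).
       family E v \<inter> R = {} \<or> family E v \<subseteq> R \<union> C)"
proof (intro exI conjI)
  let ?R = "{t. t \<notin> C \<and> (\<exists>b. bayes_ball E C X b t)}"
  have no_Y: "\<And>b. \<not> bayes_ball E C X b Y" using d_separated_no_bayes_ball[OF assms] .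
  show "?R \<inter> C = {}" "X \<in> ?R \<union> C" using bayes_ball.start[of E C X] by auto
  show "Y \<notin> ?R" using no_Y by blast
  show "\<forall>v\<in>ancestors E (insert X (insert Y C)).
       family E v \<inter> ?R = {} \<or> family E v \<subseteq> ?R \<union> C"
  proof (intro ballI)
    fix v assume v: "v \<in> ancestors E (insert X (insert Y C))"
    have "w \<in> ?R \<union> C" if "t \<in> family E v \<inter> ?R" "w \<in> family E v" for t w
      using that bayes_ball_family[OF no_Y v] by blast
    then show "family E v \<inter> ?R = {} \<or> family E v \<subseteq> ?R \<union> C"
      by blast
  qed
qed

section \<open>Summing out conditional probability tables\<close>

definition depends_only_on :: "(('v \<Rightarrow> 'a) \<Rightarrow> 'b) \<Rightarrow> 'v set \<Rightarrow> bool" where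
  "depends_only_on f S \<longleftrightarrow> (\<forall>z z'. (\<forall>v\<in>S. z v = z' v) \<longrightarrow> f z = f z')"

lemma depends_only_onD:
  "depends_only_on f S \<Longrightarrow> (\<And>v. v \<in> S \<Longrightarrow> z v = z' v) \<Longrightarrow> f z = f z'"
  unfolding depends_only_on_def by blast

lemma depends_only_on_mono: "depends_only_on f S \<Longrightarrow> S \<subseteq> S' \<Longrightarrow> depends_only_on f S'"
  unfolding depends_only_on_def by blast

lemma depends_only_on_mult:
  "depends_only_on f S \<Longrightarrow> depends_only_on g S \<Longrightarrow> depends_only_on (\<lambda>z. f z * g z) S"
  unfolding depends_only_on_def by metis

definition cond_prob_tables :: "('v \<times> 'v) set \<Rightarrow> ('v \<Rightarrow> 'a \<Rightarrow> ('v \<Rightarrow> 'a) \<Rightarrow> real) \<Rightarrow> bool" where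
  "cond_prob_tables E K \<longleftrightarrow>
     (\<forall>v a z. 0 \<le> K v a z) \<and> (\<forall>v z. (\<Sum>a\<in>UNIV. K v a z) = 1) \<and>
     (\<forall>v a. depends_only_on (K v a) (parents E v))"

lemma markovian_iff:
  "markovian E P \<longleftrightarrow> (\<exists>K. cond_prob_tables E K \<and> (\<forall>z. P z = (\<Prod>v\<in>UNIV. K v (z v) z)))"
  unfolding markovian_def cond_prob_tables_def depends_only_on_def by (intro ex_cong1) blast

lemma cond_prob_tables_local:
  assumes "cond_prob_tables E K" and "\<And>w. w \<in> parents E v \<Longrightarrow> z w = z' w"
  shows "K v a z = K v a z'"
proof (rule depends_only_onD[where f = "K v a"])
  show "depends_only_on (K v a) (parents E v)"
    using assms(1) unfolding cond_prob_tables_def by blast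
qed (fact assms(2))

lemma depends_only_on_prod_tables:
  fixes K :: "'v \<Rightarrow> 'a \<Rightarrow> ('v \<Rightarrow> 'a) \<Rightarrow> real"
  assumes "cond_prob_tables E K" and "\<And>v. v \<in> S \<Longrightarrow> family E v \<subseteq> U"
  shows "depends_only_on (\<lambda>z. \<Prod>v\<in>S. K v (z v) z) U"
  unfolding depends_only_on_def
proof (intro allI impI)
  fix z z' :: "'v \<Rightarrow> 'a" assume zz': "\<forall>v\<in>U. z v = z' v"
  show "(\<Prod>v\<in>S. K v (z v) z) = (\<Prod>v\<in>S. K v (z' v) z')"
  proof (rule prod.cong[OF refl])
    fix v assume "v \<in> S"
    then have "\<forall>w\<in>family E v. z w = z' w" using assms(2) zz' by blast
    then have "z v = z' v" and "K v (z' v) z = K v (z' v) z'"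
      unfolding family_def by (auto intro: cond_prob_tables_local[OF assms(1)])
    then show "K v (z v) z = K v (z' v) z'" by simp
  qed
qed

lemma sum_sum_fun_upd:
  fixes h :: "('v::finite \<Rightarrow> 'a::finite) \<Rightarrow> 'b::comm_semiring_1"
  shows "(\<Sum>z\<in>UNIV. \<Sum>b\<in>UNIV. h (z(d := b))) = of_nat CARD('a) * (\<Sum>z\<in>UNIV. h z)"
proof -
  have "(\<Sum>z\<in>UNIV. \<Sum>b\<in>UNIV. h (z(d := b))) = (\<Sum>(z, b)\<in>UNIV \<times> UNIV. h (z(d := b)))"
    by (simp add: sum.cartesian_product)
  also have "\<dots> = (\<Sum>(z, b)\<in>UNIV \<times> (UNIV :: 'a set). h z)"
    by (rule sum.reindex_bij_witness[where i = "\<lambda>(z, b). (z(d := b), z d)"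
          and j = "\<lambda>(z, b). (z(d := b), z d)"]) auto
  also have "\<dots> = (\<Sum>z\<in>UNIV. \<Sum>b\<in>(UNIV :: 'a set). h z)"
    by (rule sum.cartesian_product[symmetric])
  also have "\<dots> = of_nat CARD('a) * (\<Sum>z\<in>UNIV. h z)"
    by (simp add: sum_distrib_left)
  finally show ?thesis .
qed

lemma sum_out_table:
  fixes K :: "'v::finite \<Rightarrow> 'a::finite \<Rightarrow> ('v \<Rightarrow> 'a) \<Rightarrow> real"
  assumes K: "cond_prob_tables E K" and "d \<notin> parents E d" and H: "depends_only_on H (- {d})"
  shows "(\<Sum>z\<in>UNIV. H z * K d (z d) z) = (\<Sum>z\<in>UNIV. H z) / CARD('a)"
proof -
  have "CARD('a) * (\<Sum>z\<in>UNIV. H z * K d (z d) z)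
        = (\<Sum>z\<in>UNIV. \<Sum>b\<in>UNIV. H (z(d := b)) * K d b (z(d := b)))"
    using sum_sum_fun_upd[of "\<lambda>z. H z * K d (z d) z" d] by simp
  also have "\<dots> = (\<Sum>z\<in>UNIV. \<Sum>b\<in>UNIV. H z * K d b z)"
  proof (intro sum.cong refl)
    fix z :: "'v \<Rightarrow> 'a" and b
    have "H (z(d := b)) = H z" by (rule depends_only_onD[OF H]) simp
    moreover have "K d b (z(d := b)) = K d b z"
      using \<open>d \<notin> parents E d\<close> by (intro cond_prob_tables_local[OF K]) auto
    ultimately show "H (z(d := b)) * K d b (z(d := b)) = H z * K d b z" by simp
  qed
  also have "\<dots> = (\<Sum>z\<in>UNIV. H z)"
    using K unfolding cond_prob_tables_def by (simp add: sum_distrib_left[symmetric])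
  finally show ?thesis by (simp add: field_simps)
qed

(* Tables are summed out sinks first, a sink of D being a parent of no other table of D. Sums
   range over full assignments, so each summed-out coordinate leaves a factor 1 / CARD('a). *)
lemma sum_out_tables:
  fixes K :: "'v::finite \<Rightarrow> 'a::finite \<Rightarrow> ('v \<Rightarrow> 'a) \<Rightarrow> real"
  assumes "acyclic E" and K: "cond_prob_tables E K" and "depends_only_on H (- D)"
  shows "(\<Sum>z\<in>UNIV. H z * (\<Prod>v\<in>D. K v (z v) z)) = (\<Sum>z\<in>UNIV. H z) / CARD('a) ^ card D"
  using finite[of D] assms(3)
proof (induction D arbitrary: H rule: finite_remove_induct)
  case (remove D)
  obtain d where "d \<in> D" and sink: "\<And>u. (d, u) \<in> E \<Longrightarrow> u \<notin> D"
    using finite_acyclic_wf_converse[OF finite assms(1), unfolded wf_eq_minimal, rule_format, of _ D]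
      remove.hyps(2) by auto
  define H' where "H' z = H z * (\<Prod>v\<in>D - {d}. K v (z v) z)" for z
  have "depends_only_on (\<lambda>z. \<Prod>v\<in>D - {d}. K v (z v) z) (- {d})"
    using sink by (intro depends_only_on_prod_tables[OF K]) (auto simp: family_def parents_def)
  moreover have "depends_only_on H (- {d})"
    using remove.prems by (rule depends_only_on_mono) (use \<open>d \<in> D\<close> in blast)
  ultimately have H': "depends_only_on H' (- {d})"
    unfolding H'_def by (intro depends_only_on_mult)
  have "(\<Sum>z\<in>UNIV. H z * (\<Prod>v\<in>D. K v (z v) z)) = (\<Sum>z\<in>UNIV. H' z * K d (z d) z)"
    unfolding H'_def by (simp add: prod.remove[OF remove.hyps(1) \<open>d \<in> D\<close>] mult_ac)
  also have "\<dots> = (\<Sum>z\<in>UNIV. H' z) / CARD('a)"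
    using sink \<open>d \<in> D\<close> by (intro sum_out_table[OF K _ H']) (auto simp: parents_def)
  also have "(\<Sum>z\<in>UNIV. H' z) = (\<Sum>z\<in>UNIV. H z) / CARD('a) ^ card (D - {d})"
    unfolding H'_def using remove.prems
    by (intro remove.IH[OF \<open>d \<in> D\<close>]) (auto elim: depends_only_on_mono)
  also have "card D = Suc (card (D - {d}))"
    using card_Suc_Diff1[OF remove.hyps(1) \<open>d \<in> D\<close>] by simp
  ultimately show ?case by simp
qed simp

(* Exchanging the coordinates outside S of the two summation variables turns \<phi> z1 * \<psi> z2
   into \<phi> m1 * \<psi> m1, leaving m2 free up to its C-coordinates. *)
lemma sum_mult_sum_disjoint_coords:
  fixes \<phi> \<psi> :: "('v::finite \<Rightarrow> 'a::finite) \<Rightarrow> real"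
  assumes "C \<subseteq> S"
    and \<phi>: "depends_only_on \<phi> S" and \<psi>: "depends_only_on \<psi> (- S \<union> C)"
    and vanish: "\<And>z. \<not> (\<forall>v\<in>C. z v = c v) \<Longrightarrow> \<phi> z = 0 \<and> \<psi> z = 0"
  shows "(\<Sum>z\<in>UNIV. \<phi> z) * (\<Sum>z\<in>UNIV. \<psi> z)
         = card {z. \<forall>v\<in>C. z v = c v} * (\<Sum>z\<in>UNIV. \<phi> z * \<psi> z)"
proof -
  define agrees :: "('v \<Rightarrow> 'a) \<Rightarrow> real" where "agrees z = (if \<forall>v\<in>C. z v = c v then 1 else 0)" for z
  define swap :: "('v \<Rightarrow> 'a) \<times> ('v \<Rightarrow> 'a) \<Rightarrow> ('v \<Rightarrow> 'a) \<times> ('v \<Rightarrow> 'a)" where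
    "swap = (\<lambda>(z1, z2). (\<lambda>v. if v \<in> S then z1 v else z2 v, \<lambda>v. if v \<in> S then z2 v else z1 v))"
  define G where "G = (\<lambda>(m1, m2). \<phi> m1 * \<psi> m1 * agrees m2)"
  have swap_swap: "swap (swap p) = p" for p
    unfolding swap_def by (cases p) auto
  have swap_product: "\<phi> (fst p) * \<psi> (snd p) = G (swap p)" for p
  proof -
    obtain z1 z2 where p: "p = (z1, z2)" by (cases p)
    define m1 where "m1 = (\<lambda>v. if v \<in> S then z1 v else z2 v)"
    define m2 where "m2 = (\<lambda>v. if v \<in> S then z2 v else z1 v)"
    have \<phi>_m1: "\<phi> m1 = \<phi> z1" by (rule depends_only_onD[OF \<phi>]) (simp add: m1_def)
    have m2_agrees: "(\<forall>v\<in>C. m2 v = c v) \<longleftrightarrow> (\<forall>v\<in>C. z2 v = c v)"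
      unfolding m2_def using assms(1) by auto
    have "\<phi> z1 * \<psi> z2 = \<phi> m1 * \<psi> m1 * agrees m2"
    proof (cases "(\<forall>v\<in>C. z1 v = c v) \<and> (\<forall>v\<in>C. z2 v = c v)")
      case True
      then have "\<psi> m1 = \<psi> z2"
        by (intro depends_only_onD[OF \<psi>]) (auto simp: m1_def)
      then show ?thesis using True m2_agrees \<phi>_m1 by (simp add: agrees_def)
    next
      case False
      then show ?thesis using vanish[of z1] vanish[of z2] m2_agrees \<phi>_m1 by (auto simp: agrees_def)
    qed
    then show ?thesis by (simp add: p G_def swap_def m1_def m2_def)
  qed
  have "(\<Sum>z\<in>UNIV. \<phi> z) * (\<Sum>z\<in>UNIV. \<psi> z) = (\<Sum>z1\<in>UNIV. \<Sum>z2\<in>UNIV. \<phi> z1 * \<psi> z2)"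
    by (rule sum_product)
  also have "\<dots> = (\<Sum>p\<in>UNIV \<times> UNIV. \<phi> (fst p) * \<psi> (snd p))"
    by (simp add: sum.cartesian_product split_beta)
  also have "\<dots> = (\<Sum>p\<in>UNIV \<times> UNIV. G (swap p))"
    by (rule sum.cong[OF refl swap_product])
  also have "\<dots> = (\<Sum>p\<in>UNIV \<times> UNIV. G p)"
    by (rule sum.reindex_bij_witness[where i = swap and j = swap]) (auto simp: swap_swap)
  also have "\<dots> = (\<Sum>m1\<in>UNIV. \<Sum>m2\<in>UNIV. \<phi> m1 * \<psi> m1 * agrees m2)"
    unfolding G_def by (simp add: sum.cartesian_product split_beta)
  also have "\<dots> = (\<Sum>m2\<in>UNIV. agrees m2) * (\<Sum>m1\<in>UNIV. \<phi> m1 * \<psi> m1)"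
    by (simp add: sum_distrib_left sum_distrib_right mult.commute)
  also have "(\<Sum>m2\<in>UNIV. agrees m2) = card {z. \<forall>v\<in>C. z v = c v}"
    unfolding agrees_def by (simp add: sum.If_cases)
  finally show ?thesis .
qed

lemma sum_out_tables_split:
  fixes K :: "'v::finite \<Rightarrow> 'a::finite \<Rightarrow> ('v \<Rightarrow> 'a) \<Rightarrow> real"
  assumes "acyclic E" and K: "cond_prob_tables E K" and "C \<subseteq> S"
    and \<phi>: "depends_only_on \<phi> S" and \<psi>: "depends_only_on \<psi> (- S \<union> C)"
    and \<phi>\<psi>: "depends_only_on (\<lambda>z. \<phi> z * \<psi> z) A"
    and vanish: "\<And>z. \<not> (\<forall>v\<in>C. z v = c v) \<Longrightarrow> \<phi> z = 0 \<and> \<psi> z = 0"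
  shows "(\<Sum>z\<in>UNIV. \<phi> z * \<psi> z * (\<Prod>v\<in>- A. K v (z v) z))
         = (\<Sum>z\<in>UNIV. \<phi> z) * (\<Sum>z\<in>UNIV. \<psi> z)
           / (real (card {z. \<forall>v\<in>C. z v = c v}) * CARD('a) ^ card (- A))"
proof -
  define N where "N = real (card {z :: 'v \<Rightarrow> 'a. \<forall>v\<in>C. z v = c v})"
  have "0 < N" unfolding N_def by (auto simp: card_gt_0_iff)
  moreover have "(\<Sum>z\<in>UNIV. \<phi> z * \<psi> z * (\<Prod>v\<in>- A. K v (z v) z))
      = (\<Sum>z\<in>UNIV. \<phi> z * \<psi> z) / CARD('a) ^ card (- A)"
    using \<phi>\<psi> by (intro sum_out_tables[OF assms(1) K]) simp
  moreover have "(\<Sum>z\<in>UNIV. \<phi> z) * (\<Sum>z\<in>UNIV. \<psi> z) = N * (\<Sum>z\<in>UNIV. \<phi> z * \<psi> z)"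
    unfolding N_def using assms(3) \<phi> \<psi> vanish by (rule sum_mult_sum_disjoint_coords)
  ultimately have "(\<Sum>z\<in>UNIV. \<phi> z) * (\<Sum>z\<in>UNIV. \<psi> z) / (N * CARD('a) ^ card (- A))
      = (\<Sum>z\<in>UNIV. \<phi> z * \<psi> z * (\<Prod>v\<in>- A. K v (z v) z))"
    by simp
  then show ?thesis unfolding N_def by simp
qed

section \<open>Rank-one factorisation for a single Markovian distribution\<close>

lemma depends_only_on_event_indicator:
  fixes c :: "'v \<Rightarrow> 'a"
  assumes "insert V C \<subseteq> S"
  shows "depends_only_on (\<lambda>z. if z V = x \<and> (\<forall>v\<in>C. z v = c v) then 1 else 0 :: real) S"
  unfolding depends_only_on_def
proof (intro allI impI)
  fix z z' :: "'v \<Rightarrow> 'a" assume "\<forall>v\<in>S. z v = z' v"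
  then have "z V = z' V" "\<forall>v\<in>C. z v = z' v" using assms by auto
  then show "(if z V = x \<and> (\<forall>v\<in>C. z v = c v) then 1 else 0 :: real)
           = (if z' V = x \<and> (\<forall>v\<in>C. z' v = c v) then 1 else 0)" by simp
qed

lemma prod_UNIV_split:
  fixes g :: "'v::finite \<Rightarrow> 'b::comm_monoid_mult"
  assumes "B \<subseteq> A"
  shows "(\<Prod>v\<in>UNIV. g v) = (\<Prod>v\<in>B. g v) * (\<Prod>v\<in>A - B. g v) * (\<Prod>v\<in>- A. g v)"
proof -
  have "(\<Prod>v\<in>UNIV. g v) = (\<Prod>v\<in>UNIV - A. g v) * (\<Prod>v\<in>A. g v)"
    by (rule prod.subset_diff) auto
  moreover have "(\<Prod>v\<in>A. g v) = (\<Prod>v\<in>A - B. g v) * (\<Prod>v\<in>B. g v)"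
    using assms by (intro prod.subset_diff) auto
  ultimately show ?thesis by (simp add: Compl_eq_Diff_UNIV mult_ac)
qed

definition nonneg_outer_product :: "('a \<Rightarrow> 'b \<Rightarrow> real) \<Rightarrow> bool" where
  "nonneg_outer_product M \<longleftrightarrow>
     (\<exists>f g. (\<forall>x. 0 \<le> f x) \<and> (\<forall>y. 0 \<le> g y) \<and> (\<forall>x y. M x y = f x * g y))"

lemma markovian_prob_event_factorizes:
  fixes Q :: "('v::finite \<Rightarrow> 'a::finite) \<Rightarrow> real" and c :: "'v \<Rightarrow> 'a"
  assumes "acyclic E" and "markovian E Q"
    and R: "R \<inter> C = {}" "X \<in> R \<union> C" "Y \<notin> R"
    and families: "\<forall>v\<in>ancestors E (insert X (insert Y C)).
                     family E v \<inter> R = {} \<or> family E v \<subseteq> R \<union> C"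
  shows "nonneg_outer_product (\<lambda>x y. prob_event Q (\<lambda>z. z X = x \<and> z Y = y \<and> (\<forall>v\<in>C. z v = c v)))"
proof -
  obtain K where K: "cond_prob_tables E K" and Q: "\<And>z. Q z = (\<Prod>v\<in>UNIV. K v (z v) z)"
    using assms(2) unfolding markovian_iff by blast
  define A where "A = ancestors E (insert X (insert Y C))"
  define B where "B = {v\<in>A. family E v \<inter> R \<noteq> {}}"
  define \<phi> :: "'a \<Rightarrow> ('v \<Rightarrow> 'a) \<Rightarrow> real" where
    "\<phi> x z = (if z X = x \<and> (\<forall>v\<in>C. z v = c v) then 1 else 0) * (\<Prod>v\<in>B. K v (z v) z)" for x z
  define \<psi> :: "'a \<Rightarrow> ('v \<Rightarrow> 'a) \<Rightarrow> real" where
    "\<psi> y z = (if z Y = y \<and> (\<forall>v\<in>C. z v = c v) then 1 else 0) * (\<Prod>v\<in>A - B. K v (z v) z)" for y z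
  have "\<And>v. v \<in> A \<Longrightarrow> family E v \<subseteq> A"
    unfolding A_def by (rule family_subset_ancestors)
  moreover have "insert X (insert Y C) \<subseteq> A"
    unfolding A_def by (rule subset_ancestors)
  ultimately have \<phi>\<psi>_A: "depends_only_on (\<lambda>z. \<phi> x z * \<psi> y z) A" for x y
    unfolding \<phi>_def \<psi>_def
    by (intro depends_only_on_mult depends_only_on_event_indicator depends_only_on_prod_tables[OF K])
      (auto simp: B_def)
  have \<phi>_R: "depends_only_on (\<phi> x) (R \<union> C)" for x
    unfolding \<phi>_def using R families
    by (intro depends_only_on_mult depends_only_on_event_indicator depends_only_on_prod_tables[OF K])
      (auto simp: B_def A_def)
  have \<psi>_R: "depends_only_on (\<psi> y) (- (R \<union> C) \<union> C)" for y
    unfolding \<psi>_def using R families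
    by (intro depends_only_on_mult depends_only_on_event_indicator depends_only_on_prod_tables[OF K])
      (auto simp: B_def)
  have prod_split: "(\<Prod>v\<in>UNIV. g v) = (\<Prod>v\<in>B. g v) * (\<Prod>v\<in>A - B. g v) * (\<Prod>v\<in>- A. g v)"
    for g :: "'v \<Rightarrow> real"
    by (rule prod_UNIV_split) (auto simp: B_def)
  have event_sum: "prob_event Q (\<lambda>z. z X = x \<and> z Y = y \<and> (\<forall>v\<in>C. z v = c v))
      = (\<Sum>z\<in>UNIV. \<phi> x z * \<psi> y z * (\<Prod>v\<in>- A. K v (z v) z))" for x y
  proof -
    have "prob_event Q (\<lambda>z. z X = x \<and> z Y = y \<and> (\<forall>v\<in>C. z v = c v))
        = (\<Sum>z\<in>UNIV. if z X = x \<and> z Y = y \<and> (\<forall>v\<in>C. z v = c v) then Q z else 0)"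
      unfolding prob_event_def by (simp add: sum.If_cases)
    also have "\<dots> = (\<Sum>z\<in>UNIV. \<phi> x z * \<psi> y z * (\<Prod>v\<in>- A. K v (z v) z))"
      unfolding Q prod_split \<phi>_def \<psi>_def by (intro sum.cong refl) simp
    finally show ?thesis .
  qed
  define \<kappa> where "\<kappa> = 1 / (real (card {z :: 'v \<Rightarrow> 'a. \<forall>v\<in>C. z v = c v}) * CARD('a) ^ card (- A))"
  have factors: "prob_event Q (\<lambda>z. z X = x \<and> z Y = y \<and> (\<forall>v\<in>C. z v = c v))
      = \<kappa> * (\<Sum>z\<in>UNIV. \<phi> x z) * (\<Sum>z\<in>UNIV. \<psi> y z)" for x y
    unfolding event_sum \<kappa>_def
    by (subst sum_out_tables_split[OF assms(1) K _ \<phi>_R \<psi>_R \<phi>\<psi>_A]) (auto simp: \<phi>_def \<psi>_def)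
  have "0 \<le> \<phi> x z" "0 \<le> \<psi> y z" "0 \<le> \<kappa>" for x y z
    using K unfolding \<phi>_def \<psi>_def \<kappa>_def cond_prob_tables_def by (auto intro!: prod_nonneg)
  then have nonneg: "0 \<le> \<kappa> * (\<Sum>z\<in>UNIV. \<phi> x z)" "0 \<le> (\<Sum>z\<in>UNIV. \<psi> y z)" for x y
    by (auto intro!: mult_nonneg_nonneg sum_nonneg)
  show ?thesis unfolding nonneg_outer_product_def
    by (intro exI[of _ "\<lambda>x. \<kappa> * (\<Sum>z\<in>UNIV. \<phi> x z)"] exI[of _ "\<lambda>y. \<Sum>z\<in>UNIV. \<psi> y z"]
        conjI allI nonneg factors)
qed

section \<open>Mixtures and nonnegative rank\<close>

lemma nonneg_outer_product_scale:
  assumes "0 \<le> a" and "nonneg_outer_product M"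
  shows "nonneg_outer_product (\<lambda>x y. a * M x y)"
proof -
  obtain f g where "\<forall>x. 0 \<le> f x" "\<forall>y. 0 \<le> g y" "\<forall>x y. M x y = f x * g y"
    using assms(2) unfolding nonneg_outer_product_def by blast
  then show ?thesis using assms(1) unfolding nonneg_outer_product_def
    by (intro exI[of _ "\<lambda>x. a * f x"] exI[of _ g]) simp
qed

lemma nonneg_rank_le_sum:
  assumes "\<And>x y. M x y = (\<Sum>i<r. N i x y)" and "\<And>i. i < r \<Longrightarrow> nonneg_outer_product (N i)"
  shows "nonneg_rank M \<le> r"
proof -
  have "\<forall>i\<in>{..<r}. \<exists>f g. (\<forall>x. 0 \<le> f x) \<and> (\<forall>y. 0 \<le> g y) \<and> (\<forall>x y. N i x y = f x * g y)"
    using assms(2) unfolding nonneg_outer_product_def by blast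
  then obtain f where "\<forall>i\<in>{..<r}. \<exists>g. (\<forall>x. 0 \<le> f i x) \<and> (\<forall>y. 0 \<le> g y) \<and>
      (\<forall>x y. N i x y = f i x * g y)"
    by (rule bchoice[THEN exE])
  then obtain g where fg: "\<forall>i\<in>{..<r}. (\<forall>x. 0 \<le> f i x) \<and> (\<forall>y. 0 \<le> g i y) \<and>
      (\<forall>x y. N i x y = f i x * g i y)"
    by (rule bchoice[THEN exE])
  show ?thesis
    unfolding nonneg_rank_def
  proof (rule Least_le, intro exI conjI allI)
    show "0 \<le> (if i < r then f i x else 0)" "0 \<le> (if i < r then g i y else 0)" for i x y
      using fg by auto
    show "M x y = (\<Sum>i<r. (if i < r then f i x else 0) * (if i < r then g i y else 0))" for x y
      using assms(1) fg by simp
  qed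
qed

lemma prob_event_mixture:
  assumes "\<And>z. P z = (\<Sum>u<k. w u * Q u z)"
  shows "prob_event P S = (\<Sum>u<k. w u * prob_event (Q u) S)"
  unfolding prob_event_def assms by (simp add: sum.swap[of _ "{..<k}"] sum_distrib_left)

lemma nonneg_rank_prob_matrix_mixture:
  fixes Q :: "nat \<Rightarrow> ('v::finite \<Rightarrow> 'a::finite) \<Rightarrow> real"
  assumes P: "\<And>z. P z = (\<Sum>u<k. w u * Q u z)"
    and w: "\<And>u. u < k \<Longrightarrow> 0 \<le> w u" and Q: "\<And>u z. u < k \<Longrightarrow> 0 \<le> Q u z"
    and components: "\<And>u. u < k \<Longrightarrow>
      nonneg_outer_product (\<lambda>x y. prob_event (Q u) (\<lambda>z. z X = x \<and> z Y = y \<and> (\<forall>v\<in>C. z v = c v)))"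
  shows "nonneg_rank (prob_matrix P X Y C c) \<le> k"
proof -
  define Pc where "Pc = prob_event P (\<lambda>z. \<forall>v\<in>C. z v = c v)"
  have "0 \<le> Pc"
    unfolding Pc_def prob_event_mixture[OF P] prob_event_def using w Q
    by (auto intro!: sum_nonneg mult_nonneg_nonneg)
  show ?thesis
  proof (rule nonneg_rank_le_sum)
    show "prob_matrix P X Y C c x y
        = (\<Sum>u<k. w u / Pc * prob_event (Q u) (\<lambda>z. z X = x \<and> z Y = y \<and> (\<forall>v\<in>C. z v = c v)))"
      for x y
      unfolding prob_matrix_def Pc_def[symmetric]
      by (simp add: prob_event_mixture[OF P] sum_divide_distrib)
    show "nonneg_outer_product
        (\<lambda>x y. w u / Pc * prob_event (Q u) (\<lambda>z. z X = x \<and> z Y = y \<and> (\<forall>v\<in>C. z v = c v)))"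
      if "u < k" for u
      using that w \<open>0 \<le> Pc\<close> by (intro nonneg_outer_product_scale components) auto
  qed
qed

theorem lemma1:
  fixes E :: "('v::finite \<times> 'v) set"
    and P :: "('v \<Rightarrow> 'a::finite) \<Rightarrow> real"
    and k :: nat and X Y :: 'v and C :: "'v set"
  assumes "is_dag E"
    and "mixture_markovian E k P"
    and "d_separated E X Y C"
  shows "\<forall>c :: 'v \<Rightarrow> 'a. nonneg_rank (prob_matrix P X Y C c) \<le> k"
proof
  fix c :: "'v \<Rightarrow> 'a"
  have "acyclic E" using \<open>is_dag E\<close> unfolding is_dag_def .
  then obtain R where R: "R \<inter> C = {}" "X \<in> R \<union> C" "Y \<notin> R"
    "\<forall>v\<in>ancestors E (insert X (insert Y C)). family E v \<inter> R = {} \<or> family E v \<subseteq> R \<union> C"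
    using d_separated_splits_families[OF _ \<open>d_separated E X Y C\<close>] by blast
  obtain w Q where w: "\<forall>u<k. 0 \<le> w u" and Q: "\<forall>u<k. is_distribution (Q u) \<and> markovian E (Q u)"
    and P: "\<And>z. P z = (\<Sum>u<k. w u * Q u z)"
    using \<open>mixture_markovian E k P\<close> unfolding mixture_markovian_def by blast
  show "nonneg_rank (prob_matrix P X Y C c) \<le> k"
  proof (rule nonneg_rank_prob_matrix_mixture[OF P])
    fix u assume "u < k"
    then show "0 \<le> w u" and "0 \<le> Q u z" for z
      using w Q unfolding is_distribution_def by auto
    show "nonneg_outer_product
        (\<lambda>x y. prob_event (Q u) (\<lambda>z. z X = x \<and> z Y = y \<and> (\<forall>v\<in>C. z v = c v)))"
      using Q \<open>u < k\<close> by (intro markovian_prob_event_factorizes[OF \<open>acyclic E\<close> _ R]) blast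
  qed
qed

end
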